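(* Let $N$ and $M$ be sub-sound WF nets with disjoint node sets and let $n$ be a node of $N$ such that either $n$ is a place and $M$ is a pWF net, or $n$ is a transition and $M$ is a tWF net. Then $N\otimes_n M$ is a sub-sound WF net.
   Context: Petri nets and markings. A Petri net is a triple $(P,T,F)$ with $P$ a finite set of places, $T$ a finite set of transitions, $P\cap T=\emptyset$, and $F\subseteq (P\times T)\cup(T\times P)$. For a node $x$, $\bullet x=\{y\mid (y,x)\in F\}$, $x\bullet=\{y\mid (x,y)\in F\}$. A marking is a multiset over $P$ (a function $P\to\mathbb N$); sets of places are identified with bags of multiplicity one, $+,-,\le$ are pointwise, and $k.m$ is the sum of $k$ copies of $m$. Transition $t$ is enabled at $m$ iff $\bullet t\le m$, firing gives $m-\bullet t+t\bullet$, and $m\xrightarrow{*}m'$ denotes reachability by a finite (possibly empty) firing sequence. Workflow nets. A pWF net is $(P,T,F,I,O)$ with $(P,T,F)$ a Petri net, $I,O\subseteq P$ non-empty, every node reachable by a directed path from some node of $I$, and some node of $O$ reachable from every node. A tWF net is the same with $I,O$ non-empty subsets of $T$. Input nodes may have incoming edges and output nodes outgoing edges. A WF net is a pWF or tWF net. The place-completion $\mathrm{pc}(N)$ of a tWF net $N=(P,T,F,I,O)$ is obtained by adding two fresh places $p_i,p_o$ with edges $(p_i,t)$ for all $t\in I$ and $(t,p_o)$ for all $t\in O$, and taking input set $\{p_i\}$ and output set $\{p_o\}$. Sub-soundness. A pWF net is sub-sound if for all integers $k\ge k'\ge 0$ and every marking $m'$: if $k.I\xrightarrow{*}m'+k'.O$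 then $m'\xrightarrow{*}(k-k').O$. A tWF net is sub-sound iff its place-completion is. Substitution. Let $N=(P,T,F,I,O)$ and $M=(P',T',F',I',O')$ be WF nets with disjoint node sets. If $p\in P$ and $M$ is a pWF net, $N\otimes_p M$ is obtained from $N$ by deleting $p$ and all edges incident to $p$, adding all nodes and edges of $M$, adding an edge $(t,p')$ for each $t\in\bullet_N p$ and each $p'\in I'$, and an edge $(p',t)$ for each $p'\in O'$ and each $t\in p\bullet_N$; its input set is $(I\setminus\{p\})\cup I'$ if $p\in I$ and $I$ otherwise, and its output set is $(O\setminus\{p\})\cup O'$ if $p\in O$ and $O$ otherwise. If $t\in T$ and $M$ is a tWF net, $N\otimes_t M$ is defined analogously: delete $t$ and its edges, add $M$, add $(q,t')$ for each $q\in\bullet_N t$, $t'\in I'$, and $(t',q)$ for each $t'\in O'$, $q\in t\bullet_N$, with input/output sets updated in the same way. *)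

theory Defs
  imports "HOL-Library.Multiset"
begin

record 'a wfnet =
  places :: "'a set"
  trans  :: "'a set"
  flow   :: "'a rel"
  ins    :: "'a set"
  outs   :: "'a set"

definition petri_net :: "'a set \<Rightarrow> 'a set \<Rightarrow> 'a rel \<Rightarrow> bool" where
  "petri_net P T F \<longleftrightarrow> finite P \<and> finite T \<and> P \<inter> T = {} \<and> F \<subseteq> (P \<times> T) \<union> (T \<times> P)"

definition preset :: "'a rel \<Rightarrow> 'a \<Rightarrow> 'a set" where
  "preset F x = {y. (y, x) \<in> F}"

definition postset :: "'a rel \<Rightarrow> 'a \<Rightarrow> 'a set" where
  "postset F x = {y. (x, y) \<in> F}"

definition nodes :: "'a wfnet \<Rightarrow> 'a set" where
  "nodes N = places N \<union> trans N"

definition wf_conn :: "'a wfnet \<Rightarrow> bool" where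
  "wf_conn N \<longleftrightarrow> petri_net (places N) (trans N) (flow N) \<and>
     ins N \<noteq> {} \<and> outs N \<noteq> {} \<and>
     (\<forall>x \<in> nodes N. \<exists>i \<in> ins N. (i, x) \<in> (flow N)\<^sup>*) \<and>
     (\<forall>x \<in> nodes N. \<exists>q \<in> outs N. (x, q) \<in> (flow N)\<^sup>*)"

definition pWF :: "'a wfnet \<Rightarrow> bool" where
  "pWF N \<longleftrightarrow> wf_conn N \<and> ins N \<subseteq> places N \<and> outs N \<subseteq> places N"

definition tWF :: "'a wfnet \<Rightarrow> bool" where
  "tWF N \<longleftrightarrow> wf_conn N \<and> ins N \<subseteq> trans N \<and> outs N \<subseteq> trans N"

definition WF :: "'a wfnet \<Rightarrow> bool" where
  "WF N \<longleftrightarrow> pWF N \<or> tWF N"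

text \<open>Markings are multisets; a set of places is the bag of multiplicity one.\<close>
definition enabled :: "'a wfnet \<Rightarrow> 'a \<Rightarrow> 'a multiset \<Rightarrow> bool" where
  "enabled N t m \<longleftrightarrow> mset_set (preset (flow N) t) \<subseteq># m"

definition fire :: "'a wfnet \<Rightarrow> 'a \<Rightarrow> 'a multiset \<Rightarrow> 'a multiset" where
  "fire N t m = m - mset_set (preset (flow N) t) + mset_set (postset (flow N) t)"

definition step :: "'a wfnet \<Rightarrow> 'a multiset \<Rightarrow> 'a multiset \<Rightarrow> bool" where
  "step N m m' \<longleftrightarrow> (\<exists>t \<in> trans N. enabled N t m \<and> m' = fire N t m)"

definition reach :: "'a wfnet \<Rightarrow> 'a multiset \<Rightarrow> 'a multiset \<Rightarrow> bool" where
  "reach N = (step N)\<^sup>*\<^sup>*"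

definition sub_sound_p :: "'a wfnet \<Rightarrow> bool" where
  "sub_sound_p N \<longleftrightarrow>
     (\<forall>k k' m'. k' \<le> k \<longrightarrow> set_mset m' \<subseteq> places N \<longrightarrow>
        reach N (repeat_mset k (mset_set (ins N))) (m' + repeat_mset k' (mset_set (outs N))) \<longrightarrow>
        reach N m' (repeat_mset (k - k') (mset_set (outs N))))"

text \<open>Place completion of a tWF net; old nodes are tagged Inl, the fresh places
p_i and p_o are Inr False and Inr True.\<close>
definition pc :: "'a wfnet \<Rightarrow> ('a + bool) wfnet" where
  "pc N = \<lparr> places = Inl ` places N \<union> {Inr False, Inr True},
            trans = Inl ` trans N,
            flow = map_prod Inl Inl ` flow N
                   \<union> {(Inr False, Inl t) | t. t \<in> ins N}
                   \<union> {(Inl t, Inr True) | t. t \<in> outs N},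
            ins = {Inr False},
            outs = {Inr True} \<rparr>"

definition sub_sound :: "'a wfnet \<Rightarrow> bool" where
  "sub_sound N \<longleftrightarrow> (pWF N \<and> sub_sound_p N) \<or> (tWF N \<and> sub_sound_p (pc N))"

text \<open>Substitution N \<otimes>_n M (uniform for the place and the transition case).\<close>
definition subst :: "'a wfnet \<Rightarrow> 'a \<Rightarrow> 'a wfnet \<Rightarrow> 'a wfnet" where
  "subst N n M = \<lparr> places = (places N - {n}) \<union> places M,
      trans = (trans N - {n}) \<union> trans M,
      flow = {(x, y). (x, y) \<in> flow N \<and> x \<noteq> n \<and> y \<noteq> n} \<union> flow M
             \<union> {(x, y). x \<in> preset (flow N) n \<and> y \<in> ins M}
             \<union> {(x, y). x \<in> outs M \<and> y \<in> postset (flow N) n},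
      ins = (if n \<in> ins N then (ins N - {n}) \<union> ins M else ins N),
      outs = (if n \<in> outs N then (outs N - {n}) \<union> outs M else outs N) \<rparr>"

end

theory Submission
  imports Defs
begin

text \<open>Substituting a pWF net M for a place n of a pWF net N: a run of the composed net is tracked
  by a run of N, in which the d tokens currently inside M lie on n, together with a run of M started
  with one input token for each of the d + e tokens that ever entered it, e of which have left
  again. Sub-soundness of M bounds the tokens that can have left M, and lets the M-part of a
  marking drain into d output tokens, which become tokens on n; sub-soundness of N then completes
  the run, each token produced on n being pushed through M by its one-token run from inputs to
  outputs. Substituting a tWF net M for a transition n works the same way with the place
  completion of M, whose runs from p_i to p_o simulate firings of n. Finally, a tWF net N is
  reduced to its place completion, because pc (N \<otimes>_n M) = pc N \<otimes>_(Inl n) M, with M renamed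
  along Inl.\<close>

section \<open>Nets, firing and reachability\<close>

lemma petri_net_finite_flow: "petri_net P T F \<Longrightarrow> finite F"
  unfolding petri_net_def by (meson finite_SigmaI finite_Un finite_subset)

lemma finite_preset: "finite F \<Longrightarrow> finite (preset F x)"
proof -
  assume "finite F"
  moreover have "preset F x \<subseteq> fst ` F" unfolding preset_def by force
  ultimately show ?thesis by (meson finite_imageI finite_subset)
qed

lemma finite_postset: "finite F \<Longrightarrow> finite (postset F x)"
proof -
  assume "finite F"
  moreover have "postset F x \<subseteq> snd ` F" unfolding postset_def by force
  ultimately show ?thesis by (meson finite_imageI finite_subset)
qed

lemma petri_net_flowD:
  "petri_net P T F \<Longrightarrow> (x, y) \<in> F \<Longrightarrow> (x \<in> P \<and> y \<in> T) \<or> (x \<in> T \<and> y \<in> P)"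
  unfolding petri_net_def by blast

lemma preset_subset_places:
  "petri_net (places N) (trans N) (flow N) \<Longrightarrow> t \<in> trans N \<Longrightarrow> preset (flow N) t \<subseteq> places N"
  unfolding preset_def petri_net_def by blast

lemma postset_subset_places:
  "petri_net (places N) (trans N) (flow N) \<Longrightarrow> t \<in> trans N \<Longrightarrow> postset (flow N) t \<subseteq> places N"
  unfolding postset_def petri_net_def by blast

lemma set_mset_mset_set_subset: "set_mset (mset_set A) \<subseteq> A"
  by (cases "finite A") auto

lemma set_mset_preset_postset:
  assumes "petri_net (places N) (trans N) (flow N)" "t \<in> trans N"
  shows "set_mset (mset_set (preset (flow N) t)) \<subseteq> places N"
    and "set_mset (mset_set (postset (flow N) t)) \<subseteq> places N"
  using preset_subset_places[OF assms] postset_subset_places[OF assms]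
    set_mset_mset_set_subset[of "preset (flow N) t"] set_mset_mset_set_subset[of "postset (flow N) t"]
  by blast+

lemma set_mset_repeat_mset: "set_mset (repeat_mset k A) = (if k = 0 then {} else set_mset A)"
  by (auto simp flip: count_greater_zero_iff)

lemma replicate_mset_plus: "replicate_mset (a + b) x = replicate_mset a x + replicate_mset b x"
  by (induction a) auto

lemma step_transition:
  "t \<in> trans N \<Longrightarrow>
   step N (mset_set (preset (flow N) t) + R) (R + mset_set (postset (flow N) t))"
  unfolding step_def enabled_def fire_def by (rule bexI[of _ t]) auto

lemma stepE:
  assumes "step N m m'"
  obtains t R where "t \<in> trans N" "m = mset_set (preset (flow N) t) + R"
    "m' = R + mset_set (postset (flow N) t)"
  using assms unfolding step_def enabled_def fire_def
  by (metis add_diff_cancel_left' subset_mset.le_iff_add)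

lemma step_add_right: "step N m m' \<Longrightarrow> step N (m + x) (m' + x)"
  by (erule stepE) (metis step_transition add.assoc add.commute)

lemma reach_refl [simp]: "reach N m m"
  unfolding reach_def by simp

lemma reach_trans: "reach N m m' \<Longrightarrow> reach N m' m'' \<Longrightarrow> reach N m m''"
  unfolding reach_def by simp

lemma reach_step: "step N m m' \<Longrightarrow> reach N m m'"
  unfolding reach_def by simp

lemma reach_induct [consumes 1, case_names refl step]:
  assumes "reach N m m'" "P m" "\<And>x y. reach N m x \<Longrightarrow> step N x y \<Longrightarrow> P x \<Longrightarrow> P y"
  shows "P m'"
  using assms(1) unfolding reach_def
  by (induction rule: rtranclp_induct) (auto simp: reach_def intro: assms(2,3))

lemma reach_add_right: "reach N m m' \<Longrightarrow> reach N (m + x) (m' + x)"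
  by (induction rule: reach_induct) (auto intro: reach_trans reach_step step_add_right)

lemma reach_add: "reach N m m' \<Longrightarrow> reach N x x' \<Longrightarrow> reach N (m + x) (m' + x')"
  by (metis reach_add_right reach_trans add.commute)

lemma reach_repeat_mset: "reach N m m' \<Longrightarrow> reach N (repeat_mset k m) (repeat_mset k m')"
  by (induction k) (auto intro: reach_add)

lemma reach_to_empty:
  assumes "\<And>t. t \<in> trans N \<Longrightarrow> mset_set (postset (flow N) t) \<noteq> {#}"
    and "reach N m {#}"
  shows "m = {#}"
  using assms(2) unfolding reach_def
proof (induction rule: converse_rtranclp_induct)
  case (step m m')
  from \<open>step N m m'\<close> show ?case
    by (rule stepE) (use step.IH assms(1) in auto)
qed simp

section \<open>Consequences of sub-soundness\<close>

lemma sub_sound_pD: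
  "sub_sound_p N \<Longrightarrow> k' \<le> k \<Longrightarrow> set_mset m \<subseteq> places N \<Longrightarrow>
   reach N (repeat_mset k (mset_set (ins N))) (m + repeat_mset k' (mset_set (outs N))) \<Longrightarrow>
   reach N m (repeat_mset (k - k') (mset_set (outs N)))"
  unfolding sub_sound_p_def by blast

lemma pWF_petri_net: "pWF N \<Longrightarrow> petri_net (places N) (trans N) (flow N)"
  unfolding pWF_def wf_conn_def by blast

lemma tWF_petri_net: "tWF N \<Longrightarrow> petri_net (places N) (trans N) (flow N)"
  unfolding tWF_def wf_conn_def by blast

lemma pWF_not_tWF: "pWF N \<Longrightarrow> \<not> tWF N"
  unfolding pWF_def tWF_def wf_conn_def petri_net_def by blast

lemma pWF_finite_ins_outs: "pWF N \<Longrightarrow> finite (ins N) \<and> finite (outs N)"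
  unfolding pWF_def wf_conn_def petri_net_def by (meson finite_subset)

lemma pWF_mset_outs_nonempty: "pWF N \<Longrightarrow> mset_set (outs N) \<noteq> {#}"
  using pWF_finite_ins_outs[of N] unfolding pWF_def wf_conn_def by (simp add: mset_set_empty_iff)

lemma pWF_postset_nonempty:
  assumes "pWF N" "t \<in> trans N"
  shows "mset_set (postset (flow N) t) \<noteq> {#}"
proof -
  have petri: "petri_net (places N) (trans N) (flow N)"
    using assms(1) by (rule pWF_petri_net)
  have "t \<in> nodes N"
    using assms(2) unfolding nodes_def by blast
  moreover have "\<forall>x\<in>nodes N. \<exists>q\<in>outs N. (x, q) \<in> (flow N)\<^sup>*"
    using assms(1) unfolding pWF_def wf_conn_def by blast
  ultimately obtain q where q: "q \<in> outs N" "(t, q) \<in> (flow N)\<^sup>*"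
    by blast
  have "q \<in> places N" "places N \<inter> trans N = {}"
    using q(1) assms(1) petri unfolding pWF_def petri_net_def by auto
  then have "q \<noteq> t"
    using assms(2) by blast
  then obtain y where "(t, y) \<in> flow N"
    using q(2) by (metis converse_rtranclE)
  then have "postset (flow N) t \<noteq> {}"
    unfolding postset_def by blast
  then show ?thesis
    using finite_postset[OF petri_net_finite_flow[OF petri]] by (simp add: mset_set_empty_iff)
qed

lemma sub_sound_p_reach_ins_outs:
  assumes "pWF N" "sub_sound_p N"
  shows "reach N (mset_set (ins N)) (mset_set (outs N))"
proof -
  have "set_mset (mset_set (ins N)) \<subseteq> places N"
    using assms(1) set_mset_mset_set_subset[of "ins N"] unfolding pWF_def by blast
  from sub_sound_pD[OF assms(2) _ this, of 0 1] show ?thesis by simp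
qed

text \<open>By sub-soundness the surplus of c - k output tokens could be removed by a run, which is
  impossible since every transition produces a token.\<close>
lemma sub_sound_p_outputs_le_inputs:
  assumes "pWF N" "sub_sound_p N" "set_mset m \<subseteq> places N"
    and "reach N (repeat_mset k (mset_set (ins N))) (m + repeat_mset c (mset_set (outs N)))"
  shows "c \<le> k"
proof (rule ccontr)
  assume "\<not> c \<le> k"
  define m' where "m' = m + repeat_mset (c - k) (mset_set (outs N))"
  have "repeat_mset c (mset_set (outs N)) =
      repeat_mset (c - k) (mset_set (outs N)) + repeat_mset k (mset_set (outs N))"
  proof -
    have "c = (c - k) + k" using \<open>\<not> c \<le> k\<close> by simp
    then show ?thesis by (metis repeat_mset_distrib)
  qed
  then have reach_m': "reach N (repeat_mset k (mset_set (ins N))) (m' + repeat_mset k (mset_set (outs N)))"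
    using assms(4) by (simp add: m'_def add.assoc)
  have "set_mset m' \<subseteq> places N"
    using assms(1,3) set_mset_mset_set_subset[of "outs N"]
    unfolding m'_def pWF_def by (auto simp: set_mset_repeat_mset)
  from sub_sound_pD[OF assms(2) le_refl this reach_m'] have "reach N m' {#}"
    by simp
  then have "m' = {#}"
    using reach_to_empty[OF pWF_postset_nonempty[OF assms(1)]] by blast
  then show False
    using \<open>\<not> c \<le> k\<close> pWF_mset_outs_nonempty[OF assms(1)]
    unfolding m'_def by (auto simp: repeat_mset_eq_empty_iff)
qed

section \<open>Connectedness of substituted nets\<close>

definition reachable :: "'a wfnet \<Rightarrow> 'a set" where
  "reachable N = (flow N)\<^sup>* `` ins N"

definition forward_connected :: "'a wfnet \<Rightarrow> bool" where
  "forward_connected N \<longleftrightarrow> nodes N \<subseteq> reachable N"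

lemma reachable_closed: "x \<in> reachable N \<Longrightarrow> (x, y) \<in> (flow N)\<^sup>* \<Longrightarrow> y \<in> reachable N"
  unfolding reachable_def by (meson Image_iff rtrancl_trans)

lemma ins_reachable: "ins N \<subseteq> reachable N"
  unfolding reachable_def by blast

definition reverse_net :: "'a wfnet \<Rightarrow> 'a wfnet" where
  "reverse_net N = N\<lparr>flow := (flow N)\<inverse>, ins := outs N, outs := ins N\<rparr>"

definition subst_compatible :: "'a wfnet \<Rightarrow> 'a \<Rightarrow> 'a wfnet \<Rightarrow> bool" where
  "subst_compatible N n M \<longleftrightarrow> (n \<in> places N \<and> pWF M) \<or> (n \<in> trans N \<and> tWF M)"

lemma wf_conn_iff_forward_connected:
  "wf_conn N \<longleftrightarrow> petri_net (places N) (trans N) (flow N) \<and> ins N \<noteq> {} \<and> outs N \<noteq> {} \<and>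
     forward_connected N \<and> forward_connected (reverse_net N)"
  unfolding wf_conn_def forward_connected_def reachable_def reverse_net_def nodes_def
  by (auto simp: rtrancl_converse)

lemma reverse_net_subst: "reverse_net (subst N n M) = subst (reverse_net N) n (reverse_net M)"
  unfolding reverse_net_def subst_def preset_def postset_def by auto

lemma nodes_subst: "nodes (subst N n M) = (nodes N - {n}) \<union> nodes M"
  unfolding nodes_def subst_def by auto

lemma nodes_reachable_subst:
  assumes "forward_connected M" "ins M \<subseteq> reachable (subst N n M)"
  shows "nodes M \<subseteq> reachable (subst N n M)"
proof
  fix w assume "w \<in> nodes M"
  then obtain i where "i \<in> ins M" "(i, w) \<in> (flow M)\<^sup>*"
    using assms(1) unfolding forward_connected_def reachable_def by blast
  moreover have "(flow M)\<^sup>* \<subseteq> (flow (subst N n M))\<^sup>*"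
    by (rule rtrancl_mono) (auto simp: subst_def)
  ultimately show "w \<in> reachable (subst N n M)"
    using assms(2) reachable_closed[of _ "subst N n M"] by blast
qed

lemma reachable_subst:
  assumes "forward_connected M" "outs M \<inter> nodes M \<noteq> {}" "y \<in> reachable N"
  shows "(y \<noteq> n \<longrightarrow> y \<in> reachable (subst N n M)) \<and>
    (y = n \<longrightarrow> nodes M \<subseteq> reachable (subst N n M))"
proof -
  let ?C = "subst N n M"
  obtain i where "i \<in> ins N" "(i, y) \<in> (flow N)\<^sup>*"
    using assms(3) unfolding reachable_def by blast
  from this(2) show ?thesis
  proof (induction rule: rtrancl_induct)
    case base
    have "i \<noteq> n \<Longrightarrow> i \<in> ins ?C" "i = n \<Longrightarrow> ins M \<subseteq> ins ?C"
      using \<open>i \<in> ins N\<close> by (auto simp: subst_def)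
    then show ?case
      using ins_reachable[of ?C] nodes_reachable_subst[OF assms(1)] by blast
  next
    case (step y z)
    have z_reachable: "z \<in> reachable ?C" if "z \<noteq> n"
    proof (cases "y = n")
      case True
      then obtain o' where "o' \<in> outs M" "o' \<in> reachable ?C"
        using step.IH assms(2) by blast
      moreover have "(o', z) \<in> flow ?C"
        using step.hyps(2) True \<open>o' \<in> outs M\<close> by (auto simp: subst_def postset_def)
      ultimately show ?thesis
        using reachable_closed[of _ ?C] by blast
    next
      case False
      then have "(y, z) \<in> flow ?C"
        using step.hyps(2) that by (auto simp: subst_def)
      then show ?thesis
        using reachable_closed[of _ ?C] step.IH False by blast
    qed
    have "ins M \<subseteq> reachable ?C" if "z = n" "y \<noteq> n"
    proof
      fix i' assume "i' \<in> ins M"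
      then have "(y, i') \<in> flow ?C"
        using step.hyps(2) that by (auto simp: subst_def preset_def)
      then show "i' \<in> reachable ?C"
        using reachable_closed[of _ ?C] step.IH that(2) by blast
    qed
    then show ?case
      using z_reachable step.IH nodes_reachable_subst[OF assms(1)] by blast
  qed
qed

lemma forward_connected_subst:
  assumes "forward_connected N" "forward_connected M" "n \<in> nodes N" "outs M \<inter> nodes M \<noteq> {}"
  shows "forward_connected (subst N n M)"
proof -
  have "nodes N - {n} \<subseteq> reachable (subst N n M)" "nodes M \<subseteq> reachable (subst N n M)"
    using reachable_subst[OF assms(2,4)] assms(1,3) unfolding forward_connected_def by blast+
  then show ?thesis
    unfolding forward_connected_def nodes_subst by blast
qed

lemma subst_compatible_cases:
  assumes "subst_compatible N n M"
  obtains (place) "n \<in> places N" "ins M \<union> outs M \<subseteq> places M"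
    | (transition) "n \<in> trans N" "ins M \<union> outs M \<subseteq> trans M"
  using assms unfolding subst_compatible_def pWF_def tWF_def by blast

lemma subst_compatible_wf_conn: "subst_compatible N n M \<Longrightarrow> wf_conn M"
  unfolding subst_compatible_def pWF_def tWF_def by blast

lemma petri_net_subst:
  assumes petri_N: "petri_net (places N) (trans N) (flow N)"
    and compatible: "subst_compatible N n M" and disjoint: "nodes N \<inter> nodes M = {}"
  shows "petri_net (places (subst N n M)) (trans (subst N n M)) (flow (subst N n M))"
proof -
  let ?C = "subst N n M"
  have petri_M: "petri_net (places M) (trans M) (flow M)"
    using subst_compatible_wf_conn[OF compatible] unfolding wf_conn_def by blast
  note edge_N = petri_net_flowD[OF petri_N] and edge_M = petri_net_flowD[OF petri_M]
  have "e \<in> places ?C \<times> trans ?C \<union> trans ?C \<times> places ?C" if "e \<in> flow ?C" for e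
  proof -
    from that consider
        (old) x y where "e = (x, y)" "(x, y) \<in> flow N" "x \<noteq> n" "y \<noteq> n"
      | (inner) "e \<in> flow M"
      | (enter) x y where "e = (x, y)" "(x, n) \<in> flow N" "y \<in> ins M"
      | (leave) x y where "e = (x, y)" "x \<in> outs M" "(n, y) \<in> flow N"
      by (auto simp: subst_def preset_def postset_def)
    then show ?thesis
    proof cases
      case old
      then show ?thesis using edge_N[of x y] by (auto simp: subst_def)
    next
      case inner
      then show ?thesis by (cases e) (auto simp: subst_def dest: edge_M)
    next
      case enter
      show ?thesis
        using compatible enter edge_N[of x n] petri_N
        by (cases rule: subst_compatible_cases) (auto simp: subst_def petri_net_def)
    next
      case leave
      show ?thesis
        using compatible leave edge_N[of n y] petri_N
        by (cases rule: subst_compatible_cases) (auto simp: subst_def petri_net_def)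
    qed
  qed
  moreover have "finite (places ?C)" "finite (trans ?C)"
    using petri_N petri_M unfolding petri_net_def subst_def by simp_all
  moreover have "places ?C \<inter> trans ?C = {}"
    using petri_N petri_M disjoint unfolding petri_net_def subst_def nodes_def by auto
  ultimately show ?thesis
    unfolding petri_net_def by blast
qed

lemma wf_conn_subst:
  assumes "wf_conn N" "subst_compatible N n M" "nodes N \<inter> nodes M = {}"
  shows "wf_conn (subst N n M)"
proof -
  have M: "wf_conn M"
    using assms(2) by (rule subst_compatible_wf_conn)
  have n_node: "n \<in> nodes N" and M_io: "ins M \<union> outs M \<subseteq> nodes M"
    using assms(2) unfolding subst_compatible_def pWF_def tWF_def nodes_def by blast+
  have "forward_connected (subst N n M)"
    using assms(1) M n_node M_io
    by (intro forward_connected_subst) (auto simp: wf_conn_iff_forward_connected)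
  moreover have "forward_connected (subst (reverse_net N) n (reverse_net M))"
    using assms(1) M n_node M_io
    by (intro forward_connected_subst)
      (auto simp: wf_conn_iff_forward_connected reverse_net_def nodes_def)
  moreover have "ins (subst N n M) \<noteq> {}" "outs (subst N n M) \<noteq> {}"
    using assms(1) M unfolding wf_conn_def subst_def by auto
  ultimately show ?thesis
    using petri_net_subst[OF _ assms(2,3)] assms(1)
    by (simp add: wf_conn_iff_forward_connected reverse_net_subst wf_conn_def)
qed

lemma pWF_subst:
  assumes "pWF N" "subst_compatible N n M" "nodes N \<inter> nodes M = {}"
  shows "pWF (subst N n M)"
proof -
  have "n \<in> ins N \<union> outs N \<Longrightarrow> n \<notin> trans N"
    using assms(1) pWF_petri_net[OF assms(1)] unfolding pWF_def petri_net_def by blast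
  then have "n \<in> ins N \<union> outs N \<Longrightarrow> pWF M"
    using assms(2) unfolding subst_compatible_def by blast
  then have "n \<in> ins N \<union> outs N \<Longrightarrow> ins M \<union> outs M \<subseteq> places M"
    unfolding pWF_def by blast
  then have "ins (subst N n M) \<union> outs (subst N n M) \<subseteq> places (subst N n M)"
    using assms(1) unfolding pWF_def by (auto simp: subst_def)
  moreover have "wf_conn (subst N n M)"
    using wf_conn_subst[OF _ assms(2,3)] assms(1) unfolding pWF_def by blast
  ultimately show ?thesis
    unfolding pWF_def by blast
qed

lemma tWF_subst:
  assumes "tWF N" "subst_compatible N n M" "nodes N \<inter> nodes M = {}"
  shows "tWF (subst N n M)"
proof -
  have "n \<in> ins N \<union> outs N \<Longrightarrow> n \<notin> places N"
    using assms(1) tWF_petri_net[OF assms(1)] unfolding tWF_def petri_net_def by blast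
  then have "n \<in> ins N \<union> outs N \<Longrightarrow> tWF M"
    using assms(2) unfolding subst_compatible_def by blast
  then have "n \<in> ins N \<union> outs N \<Longrightarrow> ins M \<union> outs M \<subseteq> trans M"
    unfolding tWF_def by blast
  then have "ins (subst N n M) \<union> outs (subst N n M) \<subseteq> trans (subst N n M)"
    using assms(1) unfolding tWF_def by (auto simp: subst_def)
  moreover have "wf_conn (subst N n M)"
    using wf_conn_subst[OF _ assms(2,3)] assms(1) unfolding tWF_def by blast
  ultimately show ?thesis
    unfolding tWF_def by blast
qed

section \<open>Renaming and place completion\<close>

definition rename :: "('a \<Rightarrow> 'b) \<Rightarrow> 'a wfnet \<Rightarrow> 'b wfnet" where
  "rename f N = \<lparr>places = f ` places N, trans = f ` trans N, flow = map_prod f f ` flow N,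
     ins = f ` ins N, outs = f ` outs N\<rparr>"

lemma rename_simps [simp]:
  "places (rename f N) = f ` places N" "trans (rename f N) = f ` trans N"
  "flow (rename f N) = map_prod f f ` flow N" "ins (rename f N) = f ` ins N"
  "outs (rename f N) = f ` outs N"
  unfolding rename_def by simp_all

lemma nodes_rename: "nodes (rename f N) = f ` nodes N"
  unfolding nodes_def by auto

lemma rtrancl_map_prod_image: "(x, y) \<in> F\<^sup>* \<Longrightarrow> (f x, f y) \<in> (map_prod f f ` F)\<^sup>*"
proof (induction rule: rtrancl_induct)
  case (step y z)
  then have "(f y, f z) \<in> map_prod f f ` F" by force
  with step.IH show ?case by (rule rtrancl.rtrancl_into_rtrancl)
qed simp

lemma forward_connected_rename:
  assumes "forward_connected N"
  shows "forward_connected (rename f N)"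
  unfolding forward_connected_def nodes_rename
proof
  fix x assume "x \<in> f ` nodes N"
  then obtain y i where "x = f y" "i \<in> ins N" "(i, y) \<in> (flow N)\<^sup>*"
    using assms unfolding forward_connected_def reachable_def by blast
  then show "x \<in> reachable (rename f N)"
    using rtrancl_map_prod_image[of i y "flow N" f] unfolding reachable_def by auto
qed

lemma image_mset_repeat_mset: "image_mset f (repeat_mset k m) = repeat_mset k (image_mset f m)"
  by (induction k) auto

lemma image_mset_preimage:
  "set_mset m \<subseteq> f ` A \<Longrightarrow> \<exists>m0. m = image_mset f m0 \<and> set_mset m0 \<subseteq> A"
proof (induction m)
  case (add x m)
  then have "x \<in> f ` A" "set_mset m \<subseteq> f ` A"
    by simp_all
  then obtain m0 a where "m = image_mset f m0" "set_mset m0 \<subseteq> A" "a \<in> A" "x = f a"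
    using add.IH by blast
  then show ?case
    by (intro exI[of _ "add_mset a m0"]) simp
qed simp

context
  fixes f :: "'a \<Rightarrow> 'b" and N :: "'a wfnet"
  assumes inj: "inj f"
begin

lemma preset_rename: "preset (map_prod f f ` F) (f t) = f ` preset F t"
  using inj unfolding preset_def by (auto simp: inj_eq)

lemma postset_rename: "postset (map_prod f f ` F) (f t) = f ` postset F t"
  using inj unfolding postset_def by (auto simp: inj_eq)

lemma mset_set_image_inj: "mset_set (f ` A) = image_mset f (mset_set A)"
  using inj by (simp add: image_mset_mset_set inj_on_subset[of f UNIV])

lemma step_rename: "step N m m' \<Longrightarrow> step (rename f N) (image_mset f m) (image_mset f m')"
proof (erule stepE)
  fix t R assume t: "t \<in> trans N" "m = mset_set (preset (flow N) t) + R"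
    "m' = R + mset_set (postset (flow N) t)"
  have "step (rename f N) (mset_set (preset (flow (rename f N)) (f t)) + image_mset f R)
      (image_mset f R + mset_set (postset (flow (rename f N)) (f t)))"
    using t(1) by (intro step_transition) simp
  then show ?thesis
    using t(2,3) by (simp add: preset_rename postset_rename mset_set_image_inj)
qed

lemma reach_rename: "reach N m m' \<Longrightarrow> reach (rename f N) (image_mset f m) (image_mset f m')"
  by (induction rule: reach_induct) (auto intro: reach_trans reach_step step_rename)

lemma step_rename_inverse:
  assumes "step (rename f N) (image_mset f m) m'"
  obtains m0 where "m' = image_mset f m0" "step N m m0"
  using assms
proof (rule stepE)
  fix t' R' assume t': "t' \<in> trans (rename f N)"
    "image_mset f m = mset_set (preset (flow (rename f N)) t') + R'"
    "m' = R' + mset_set (postset (flow (rename f N)) t')"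
  then obtain t where t: "t \<in> trans N" "t' = f t" by auto
  then have "image_mset f m = image_mset f (mset_set (preset (flow N) t)) + R'"
    using t'(2) by (simp add: preset_rename mset_set_image_inj)
  then obtain R where R: "m = mset_set (preset (flow N) t) + R" "R' = image_mset f R"
    using image_mset_eq_image_mset_plusD inj by (metis inj_on_subset subset_UNIV)
  have "m' = image_mset f (R + mset_set (postset (flow N) t))"
    using t'(3) t R(2) by (simp add: postset_rename mset_set_image_inj)
  moreover have "step N m (R + mset_set (postset (flow N) t))"
    unfolding R(1) using t(1) by (rule step_transition)
  ultimately show thesis by (rule that)
qed

lemma reach_rename_inverse:
  assumes "reach (rename f N) (image_mset f m) m'"
  obtains m0 where "m' = image_mset f m0" "reach N m m0"
proof -
  from assms have "\<exists>m0. m' = image_mset f m0 \<and> reach N m m0"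
  proof (induction rule: reach_induct)
    case refl
    show ?case using reach_refl by blast
  next
    case (step x y)
    then obtain x0 where x0: "x = image_mset f x0" "reach N m x0"
      by blast
    with step.hyps(2) have "step (rename f N) (image_mset f x0) y"
      by simp
    then obtain y0 where "y = image_mset f y0" "step N x0 y0"
      by (rule step_rename_inverse)
    with x0(2) show ?case
      using reach_trans reach_step by blast
  qed
  with that show thesis
    by blast
qed

lemma image_mset_inj_eq: "image_mset f A = image_mset f B \<longleftrightarrow> A = B"
proof
  assume "image_mset f A = image_mset f B"
  then show "A = B"
    using image_mset_eq_image_mset_plusD[of f A B "{#}"] inj_on_subset[OF inj subset_UNIV]
    by simp
qed simp

lemma reach_rename_iff: "reach (rename f N) (image_mset f m) (image_mset f m') \<longleftrightarrow> reach N m m'"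
proof
  assume "reach (rename f N) (image_mset f m) (image_mset f m')"
  then obtain m0 where "image_mset f m' = image_mset f m0" "reach N m m0"
    by (rule reach_rename_inverse)
  then show "reach N m m'"
    by (simp add: image_mset_inj_eq)
qed (rule reach_rename)

lemma sub_sound_p_rename: "sub_sound_p N \<Longrightarrow> sub_sound_p (rename f N)"
  unfolding sub_sound_p_def[of "rename f N"]
proof (intro allI impI)
  fix k k' m'
  assume sound: "sub_sound_p N" and "k' \<le> k" and "set_mset m' \<subseteq> places (rename f N)"
    and run: "reach (rename f N) (repeat_mset k (mset_set (ins (rename f N))))
      (m' + repeat_mset k' (mset_set (outs (rename f N))))"
  obtain m0 where m0: "m' = image_mset f m0" "set_mset m0 \<subseteq> places N"
    using image_mset_preimage[of m' f] \<open>set_mset m' \<subseteq> places (rename f N)\<close> by auto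
  have "reach (rename f N) (image_mset f (repeat_mset k (mset_set (ins N))))
      (image_mset f (m0 + repeat_mset k' (mset_set (outs N))))"
    using run by (simp add: m0(1) mset_set_image_inj image_mset_repeat_mset)
  then have "reach N m0 (repeat_mset (k - k') (mset_set (outs N)))"
    using sub_sound_pD[OF sound \<open>k' \<le> k\<close> m0(2)] by (simp only: reach_rename_iff)
  then show "reach (rename f N) m' (repeat_mset (k - k') (mset_set (outs (rename f N))))"
    by (simp flip: reach_rename_iff add: m0(1) mset_set_image_inj image_mset_repeat_mset)
qed

lemma wf_conn_rename: "wf_conn N \<Longrightarrow> wf_conn (rename f N)"
proof -
  assume N: "wf_conn N"
  have "reverse_net (rename f N) = rename f (reverse_net N)"
    unfolding rename_def reverse_net_def by auto
  then have "forward_connected (rename f N) \<and> forward_connected (reverse_net (rename f N))"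
    using N forward_connected_rename[of N f] forward_connected_rename[of "reverse_net N" f]
    unfolding wf_conn_iff_forward_connected by simp
  moreover have "petri_net (places (rename f N)) (trans (rename f N)) (flow (rename f N))"
    using N inj unfolding wf_conn_def petri_net_def by (auto simp: inj_eq)
  ultimately show ?thesis
    using N unfolding wf_conn_iff_forward_connected by simp
qed

lemma pWF_rename: "pWF N \<Longrightarrow> pWF (rename f N)"
  unfolding pWF_def using wf_conn_rename by auto

lemma tWF_rename: "tWF N \<Longrightarrow> tWF (rename f N)"
  unfolding tWF_def using wf_conn_rename by auto

end

lemma pc_simps [simp]:
  "places (pc N) = Inl ` places N \<union> {Inr False, Inr True}" "trans (pc N) = Inl ` trans N"
  "ins (pc N) = {Inr False}" "outs (pc N) = {Inr True}"
  unfolding pc_def by simp_all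

lemma nodes_pc: "nodes (pc N) = Inl ` nodes N \<union> {Inr False, Inr True}"
  unfolding nodes_def by auto

lemma preset_pc_Inl:
  "preset (flow (pc N)) (Inl t) = Inl ` preset (flow N) t \<union> (if t \<in> ins N then {Inr False} else {})"
  unfolding pc_def preset_def by auto

lemma postset_pc_Inl:
  "postset (flow (pc N)) (Inl t) = Inl ` postset (flow N) t \<union> (if t \<in> outs N then {Inr True} else {})"
  unfolding pc_def postset_def by auto

lemma pc_rename: "pc (rename f N) = rename (map_sum f id) (pc N)"
  unfolding pc_def rename_def by (auto simp: image_Un) force+

lemma pc_subst: "pc (subst N n M) = subst (pc N) (Inl n) (rename Inl M)"
  unfolding pc_def subst_def rename_def preset_def postset_def by auto

lemma reverse_net_pc: "reverse_net (pc N) = rename (map_sum id Not) (pc (reverse_net N))"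
  unfolding pc_def rename_def reverse_net_def by (auto simp: image_Un) force+

lemma forward_connected_pc:
  assumes "forward_connected N" "outs N \<inter> nodes N \<noteq> {}"
  shows "forward_connected (pc N)"
proof -
  have "map_prod Inl Inl ` flow N \<subseteq> flow (pc N)"
    unfolding pc_def by auto
  then have lift: "(Inl x, Inl y) \<in> (flow (pc N))\<^sup>*" if "(x, y) \<in> (flow N)\<^sup>*" for x y
    using rtrancl_map_prod_image[OF that] rtrancl_mono by blast
  have Inl_ins: "Inl i \<in> reachable (pc N)" if "i \<in> ins N" for i
    using that unfolding reachable_def pc_def by auto
  have nodes_reachable: "Inl ` nodes N \<subseteq> reachable (pc N)"
  proof
    fix x :: "'a + bool" assume "x \<in> Inl ` nodes N"
    then obtain y i where "x = Inl y" "i \<in> ins N" "(i, y) \<in> (flow N)\<^sup>*"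
      using assms(1) unfolding forward_connected_def reachable_def by blast
    then show "x \<in> reachable (pc N)"
      using Inl_ins lift reachable_closed[of "Inl i" "pc N"] by blast
  qed
  obtain o' where "o' \<in> outs N" "o' \<in> nodes N"
    using assms(2) by blast
  moreover have "(Inl o', Inr True) \<in> flow (pc N)" if "o' \<in> outs N"
    using that unfolding pc_def by auto
  ultimately have "Inr True \<in> reachable (pc N)"
    using nodes_reachable reachable_closed[of _ "pc N"] by blast
  moreover have "Inr False \<in> reachable (pc N)"
    using ins_reachable[of "pc N"] by simp
  ultimately show ?thesis
    using nodes_reachable unfolding forward_connected_def nodes_pc by auto
qed

lemma pc_pWF:
  assumes "tWF N"
  shows "pWF (pc N)"
proof -
  have N: "wf_conn N" "ins N \<subseteq> trans N" "outs N \<subseteq> trans N"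
    using assms unfolding tWF_def by blast+
  have "ins N \<inter> nodes N \<noteq> {}" "outs N \<inter> nodes N \<noteq> {}"
    using N unfolding wf_conn_def nodes_def by blast+
  moreover have "outs (reverse_net N) = ins N" "nodes (reverse_net N) = nodes N"
    unfolding reverse_net_def nodes_def by simp_all
  ultimately have "forward_connected (pc N)" "forward_connected (pc (reverse_net N))"
    using N(1) forward_connected_pc[of N] forward_connected_pc[of "reverse_net N"]
    unfolding wf_conn_iff_forward_connected by simp_all
  then have "forward_connected (reverse_net (pc N))"
    unfolding reverse_net_pc using forward_connected_rename by blast
  moreover have "petri_net (places (pc N)) (trans (pc N)) (flow (pc N))"
    using N unfolding wf_conn_def petri_net_def pc_def by auto
  ultimately show ?thesis
    using \<open>forward_connected (pc N)\<close> unfolding pWF_def wf_conn_iff_forward_connected by simp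
qed

section \<open>Sub-soundness of substituted nets\<close>

text \<open>Here N is a pWF net; a tWF net N is handled through its place completion.\<close>
locale subst_nets =
  fixes N M :: "'a wfnet" and n :: 'a
  assumes petri_N: "petri_net (places N) (trans N) (flow N)"
    and petri_M: "petri_net (places M) (trans M) (flow M)"
    and ins_N: "ins N \<subseteq> places N" and outs_N: "outs N \<subseteq> places N"
    and sound_N: "sub_sound_p N"
    and disjoint: "nodes N \<inter> nodes M = {}"
begin

abbreviation C :: "'a wfnet" where
  "C \<equiv> subst N n M"

lemma finite_nets:
  "finite (places N)" "finite (trans N)" "finite (flow N)"
  "finite (places M)" "finite (trans M)" "finite (flow M)"
  using petri_N petri_M petri_net_finite_flow unfolding petri_net_def by auto

lemma finite_ins_outs_N: "finite (ins N)" "finite (outs N)"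
  using finite_nets ins_N outs_N finite_subset by blast+

lemma finite_preset_postset:
  "finite (preset (flow N) t)" "finite (postset (flow N) t)"
  "finite (preset (flow M) t)" "finite (postset (flow M) t)"
  by (simp_all add: finite_preset finite_postset finite_nets)

lemma disjoint_nodes:
  "places N \<inter> places M = {}" "places N \<inter> trans M = {}"
  "trans N \<inter> places M = {}" "trans N \<inter> trans M = {}"
  using disjoint unfolding nodes_def by blast+

lemma places_trans_disjoint: "places N \<inter> trans N = {}" "places M \<inter> trans M = {}"
  using petri_N petri_M unfolding petri_net_def by blast+

lemma edge_N:
  "(x, y) \<in> flow N \<Longrightarrow> (x \<in> places N \<and> y \<in> trans N) \<or> (x \<in> trans N \<and> y \<in> places N)"
  by (rule petri_net_flowD[OF petri_N])

lemma edge_M: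
  "(x, y) \<in> flow M \<Longrightarrow> (x \<in> places M \<and> y \<in> trans M) \<or> (x \<in> trans M \<and> y \<in> places M)"
  by (rule petri_net_flowD[OF petri_M])

definition N_part :: "'a multiset \<Rightarrow> 'a multiset" where
  "N_part m = filter_mset (\<lambda>p. p \<notin> places M) m"

definition M_part :: "'a multiset \<Rightarrow> 'a multiset" where
  "M_part m = filter_mset (\<lambda>p. p \<in> places M) m"

lemma N_part_add [simp]: "N_part (x + y) = N_part x + N_part y"
  and M_part_add [simp]: "M_part (x + y) = M_part x + M_part y"
  unfolding N_part_def M_part_def by simp_all

lemma N_part_repeat: "N_part (repeat_mset k x) = repeat_mset k (N_part x)"
  and M_part_repeat: "M_part (repeat_mset k x) = repeat_mset k (M_part x)"
  by (induction k) (simp_all add: N_part_def M_part_def)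

lemma N_part_M_part: "N_part m + M_part m = m"
  unfolding N_part_def M_part_def by (metis multiset_partition add.commute)

lemma set_M_part: "set_mset (M_part m) \<subseteq> places M"
  unfolding M_part_def by auto

lemma parts_of_N_marking:
  assumes "set_mset x \<subseteq> places N"
  shows "N_part x = x" "M_part x = {#}"
  using assms disjoint_nodes(1) unfolding N_part_def M_part_def
  by (auto simp: filter_mset_eq_conv)

lemma parts_of_M_marking:
  assumes "set_mset x \<subseteq> places M"
  shows "N_part x = {#}" "M_part x = x"
  using assms unfolding N_part_def M_part_def by (auto simp: filter_mset_eq_conv)

end

locale place_subst = subst_nets +
  assumes n_place: "n \<in> places N" and pWF_M: "pWF M" and sound_M: "sub_sound_p M"
begin

abbreviation I\<^sub>M :: "'a multiset" where "I\<^sub>M \<equiv> mset_set (ins M)"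
abbreviation O\<^sub>M :: "'a multiset" where "O\<^sub>M \<equiv> mset_set (outs M)"

lemma ins_outs_M: "ins M \<subseteq> places M" "outs M \<subseteq> places M"
  using pWF_M unfolding pWF_def by blast+

lemma set_I_O_M: "set_mset I\<^sub>M \<subseteq> places M" "set_mset O\<^sub>M \<subseteq> places M"
  using ins_outs_M set_mset_mset_set_subset[of "ins M"] set_mset_mset_set_subset[of "outs M"]
  by blast+

definition subst_tokens :: "'a multiset \<Rightarrow> 'a multiset \<Rightarrow> 'a multiset" where
  "subst_tokens X m = filter_mset (\<lambda>p. p \<noteq> n) m + repeat_mset (count m n) X"

lemma subst_tokens_add [simp]: "subst_tokens X (x + y) = subst_tokens X x + subst_tokens X y"
  unfolding subst_tokens_def by (simp add: repeat_mset_distrib)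

lemma subst_tokens_empty [simp]: "subst_tokens X {#} = {#}"
  unfolding subst_tokens_def by simp

lemma subst_tokens_replicate [simp]: "subst_tokens X (replicate_mset j n) = repeat_mset j X"
  unfolding subst_tokens_def by (induction j) auto

lemma subst_tokens_repeat: "subst_tokens X (repeat_mset k x) = repeat_mset k (subst_tokens X x)"
  by (induction k) auto

lemma subst_tokens_no_n:
  assumes "n \<notin># x"
  shows "subst_tokens X x = x"
proof -
  have "filter_mset (\<lambda>p. p \<noteq> n) x = x"
    using assms by (auto simp: filter_mset_eq_conv)
  moreover have "count x n = 0"
    using assms by (simp add: not_in_iff)
  ultimately show ?thesis
    unfolding subst_tokens_def by simp
qed

lemma split_n_tokens: "x = filter_mset (\<lambda>p. p \<noteq> n) x + replicate_mset (count x n) n"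
  by (metis filter_eq_replicate_mset multiset_partition add.commute)

lemma parts_subst_tokens:
  assumes "set_mset x \<subseteq> places N" "set_mset X \<subseteq> places M"
  shows "N_part (subst_tokens X x) = filter_mset (\<lambda>p. p \<noteq> n) x"
    and "M_part (subst_tokens X x) = repeat_mset (count x n) X"
proof -
  have "set_mset (filter_mset (\<lambda>p. p \<noteq> n) x) \<subseteq> places N"
    using assms(1) by auto
  moreover have "set_mset (repeat_mset (count x n) X) \<subseteq> places M"
    using assms(2) by (simp add: set_mset_repeat_mset)
  ultimately show "N_part (subst_tokens X x) = filter_mset (\<lambda>p. p \<noteq> n) x"
    and "M_part (subst_tokens X x) = repeat_mset (count x n) X"
    unfolding subst_tokens_def by (simp_all add: parts_of_N_marking parts_of_M_marking)
qed

text \<open>The inputs, outputs, presets and postsets of C arise in this way from those of N.\<close>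
lemma mset_set_replace_n:
  assumes "finite S" "S \<subseteq> places N" "T \<subseteq> places M"
  shows "mset_set (S - {n} \<union> (if n \<in> S then T else {})) = subst_tokens (mset_set T) (mset_set S)"
proof -
  have "finite T"
    using assms(3) finite_nets(4) finite_subset by blast
  have "mset_set S = mset_set (S - {n}) + (if n \<in> S then {#n#} else {#})"
    using assms(1) by (auto simp: mset_set.remove)
  moreover have "(S - {n}) \<inter> T = {}"
    using assms(2,3) disjoint_nodes(1) by blast
  ultimately show ?thesis
    using assms(1) \<open>finite T\<close> subst_tokens_replicate[of X 1 for X]
    by (auto simp: mset_set_Union subst_tokens_no_n)
qed

lemma trans_C: "trans C = trans N \<union> trans M"
  using n_place places_trans_disjoint(1) unfolding subst_def by auto

lemma mset_ins_C: "mset_set (ins C) = subst_tokens I\<^sub>M (mset_set (ins N))"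
  using mset_set_replace_n[OF finite_ins_outs_N(1) ins_N ins_outs_M(1)]
  unfolding subst_def by auto

lemma mset_outs_C: "mset_set (outs C) = subst_tokens O\<^sub>M (mset_set (outs N))"
  using mset_set_replace_n[OF finite_ins_outs_N(2) outs_N ins_outs_M(2)]
  unfolding subst_def by auto

lemma preset_C_N:
  assumes "t \<in> trans N"
  shows "mset_set (preset (flow C) t) = subst_tokens O\<^sub>M (mset_set (preset (flow N) t))"
proof -
  have "preset (flow C) t = preset (flow N) t - {n} \<union> (if n \<in> preset (flow N) t then outs M else {})"
    using assms disjoint_nodes ins_outs_M n_place places_trans_disjoint(1)
    by (auto simp: subst_def preset_def postset_def dest: edge_M)
  then show ?thesis
    using mset_set_replace_n[OF finite_preset_postset(1) preset_subset_places[OF petri_N assms]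
        ins_outs_M(2)] by simp
qed

lemma postset_C_N:
  assumes "t \<in> trans N"
  shows "mset_set (postset (flow C) t) = subst_tokens I\<^sub>M (mset_set (postset (flow N) t))"
proof -
  have "postset (flow C) t = postset (flow N) t - {n} \<union> (if n \<in> postset (flow N) t then ins M else {})"
    using assms disjoint_nodes ins_outs_M n_place places_trans_disjoint(1)
    by (auto simp: subst_def preset_def postset_def dest: edge_M)
  then show ?thesis
    using mset_set_replace_n[OF finite_preset_postset(2) postset_subset_places[OF petri_N assms]
        ins_outs_M(1)] by simp
qed

lemma preset_postset_C_M:
  assumes "t \<in> trans M"
  shows "preset (flow C) t = preset (flow M) t" "postset (flow C) t = postset (flow M) t"
  using assms disjoint_nodes ins_outs_M places_trans_disjoint(2)
  by (auto simp: subst_def preset_def postset_def dest: edge_N)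

lemma reach_M_in_C: "reach M x y \<Longrightarrow> reach C x y"
proof (induction rule: reach_induct)
  case (step y z)
  from step.hyps(2) show ?case
  proof (rule stepE)
    fix t R assume t: "t \<in> trans M" "y = mset_set (preset (flow M) t) + R"
      "z = R + mset_set (postset (flow M) t)"
    then have "step C y z"
      using step_transition[of t C R] trans_C preset_postset_C_M by simp
    then show ?thesis
      using step.IH reach_trans reach_step by blast
  qed
qed simp

text \<open>A run of N is simulated in C by letting every token produced on n run through M.\<close>
lemma reach_N_in_C: "reach N x y \<Longrightarrow> reach C (subst_tokens O\<^sub>M x) (subst_tokens O\<^sub>M y)"
proof (induction rule: reach_induct)
  case (step y z)
  from step.hyps(2) show ?case
  proof (rule stepE)
    fix t R assume t: "t \<in> trans N" "y = mset_set (preset (flow N) t) + R"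
      "z = R + mset_set (postset (flow N) t)"
    define Q where "Q = mset_set (postset (flow N) t)"
    have "step C (subst_tokens O\<^sub>M y) (subst_tokens O\<^sub>M R + subst_tokens I\<^sub>M Q)"
      using step_transition[of t C "subst_tokens O\<^sub>M R"] t trans_C
      by (simp add: preset_C_N postset_C_N Q_def)
    moreover have "reach M (repeat_mset (count Q n) I\<^sub>M) (repeat_mset (count Q n) O\<^sub>M)"
      by (rule reach_repeat_mset[OF sub_sound_p_reach_ins_outs[OF pWF_M sound_M]])
    then have "reach C (subst_tokens I\<^sub>M Q) (subst_tokens O\<^sub>M Q)"
      unfolding subst_tokens_def by (intro reach_add reach_refl reach_M_in_C)
    moreover have "subst_tokens O\<^sub>M z = subst_tokens O\<^sub>M R + subst_tokens O\<^sub>M Q"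
      unfolding t(3) Q_def by simp
    ultimately have "reach C (subst_tokens O\<^sub>M y) (subst_tokens O\<^sub>M z)"
      using reach_step reach_trans reach_add[OF reach_refl] by metis
    then show ?thesis
      using step.IH reach_trans by blast
  qed
qed simp

text \<open>The invariant of runs of C: d tokens are inside M (they sit on n from N's point of view)
  and e tokens have left M again.\<close>
definition consistent :: "nat \<Rightarrow> 'a multiset \<Rightarrow> bool" where
  "consistent k m \<longleftrightarrow> (\<exists>d e.
     reach N (repeat_mset k (mset_set (ins N))) (N_part m + replicate_mset d n) \<and>
     reach M (repeat_mset (d + e) I\<^sub>M) (M_part m + repeat_mset e O\<^sub>M))"

lemma consistent_init: "consistent k (repeat_mset k (mset_set (ins C)))"
proof -
  define c where "c = count (mset_set (ins N)) n"
  have "set_mset (mset_set (ins N)) \<subseteq> places N"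
    using ins_N set_mset_mset_set_subset[of "ins N"] by blast
  then have "N_part (mset_set (ins C)) + replicate_mset c n = mset_set (ins N)"
      "M_part (mset_set (ins C)) = repeat_mset c I\<^sub>M"
    unfolding mset_ins_C c_def using split_n_tokens[of "mset_set (ins N)"]
    by (simp_all add: parts_subst_tokens set_I_O_M)
  then have "N_part (repeat_mset k (mset_set (ins C))) + replicate_mset (k * c) n =
        repeat_mset k (mset_set (ins N))"
      "M_part (repeat_mset k (mset_set (ins C))) = repeat_mset (k * c) I\<^sub>M"
    by (metis N_part_repeat M_part_repeat repeat_mset_distrib2 repeat_mset_replicate_mset
        repeat_mset_right)+
  then show ?thesis
    unfolding consistent_def by (intro exI[of _ "k * c"] exI[of _ 0]) simp
qed

lemma consistent_step_M:
  assumes "consistent k m" "t \<in> trans M"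
    and "m = mset_set (preset (flow M) t) + R" "m' = R + mset_set (postset (flow M) t)"
  shows "consistent k m'"
proof -
  obtain d e where
    run_N: "reach N (repeat_mset k (mset_set (ins N))) (N_part m + replicate_mset d n)" and
    run_M: "reach M (repeat_mset (d + e) I\<^sub>M) (M_part m + repeat_mset e O\<^sub>M)"
    using assms(1) unfolding consistent_def by blast
  note places_t = set_mset_preset_postset[OF petri_M assms(2)]
  have "N_part m' = N_part m"
    using assms(3,4) places_t by (simp add: parts_of_M_marking)
  moreover have "step M (M_part m + repeat_mset e O\<^sub>M) (M_part m' + repeat_mset e O\<^sub>M)"
    using step_transition[OF assms(2), of "M_part R + repeat_mset e O\<^sub>M"] assms(3,4) places_t
    by (simp add: parts_of_M_marking ac_simps)
  ultimately show ?thesis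
    unfolding consistent_def using run_N run_M reach_trans reach_step by metis
qed

lemma step_with_tokens_on_n:
  assumes "t \<in> trans N" "count (mset_set (preset (flow N) t)) n \<le> d"
  shows "step N (filter_mset (\<lambda>p. p \<noteq> n) (mset_set (preset (flow N) t)) + x + replicate_mset d n)
    (x + filter_mset (\<lambda>p. p \<noteq> n) (mset_set (postset (flow N) t)) + replicate_mset
      (d - count (mset_set (preset (flow N) t)) n + count (mset_set (postset (flow N) t)) n) n)"
proof -
  define P where "P = mset_set (preset (flow N) t)"
  define Q where "Q = mset_set (postset (flow N) t)"
  have "replicate_mset d n = replicate_mset (count P n) n + replicate_mset (d - count P n) n"
    using assms(2) unfolding P_def by (metis le_add_diff_inverse replicate_mset_plus)
  then have "filter_mset (\<lambda>p. p \<noteq> n) P + x + replicate_mset d n =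
      P + (x + replicate_mset (d - count P n) n)"
    using split_n_tokens[of P] by (simp add: ac_simps)
  moreover have "(x + replicate_mset (d - count P n) n) + Q =
      x + filter_mset (\<lambda>p. p \<noteq> n) Q + replicate_mset (d - count P n + count Q n) n"
    using split_n_tokens[of Q] by (simp add: replicate_mset_plus ac_simps)
  ultimately show ?thesis
    using step_transition[OF assms(1), of "x + replicate_mset (d - count P n) n"]
    unfolding P_def Q_def by metis
qed

lemma consistent_step_N:
  assumes "consistent k m" "t \<in> trans N"
    and "m = mset_set (preset (flow C) t) + R" "m' = R + mset_set (postset (flow C) t)"
  shows "consistent k m'"
proof -
  obtain d e where
    run_N: "reach N (repeat_mset k (mset_set (ins N))) (N_part m + replicate_mset d n)" and
    run_M: "reach M (repeat_mset (d + e) I\<^sub>M) (M_part m + repeat_mset e O\<^sub>M)"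
    using assms(1) unfolding consistent_def by blast
  define P where "P = mset_set (preset (flow N) t)"
  define Q where "Q = mset_set (postset (flow N) t)"
  define cP where "cP = count P n"
  define cQ where "cQ = count Q n"
  have "set_mset P \<subseteq> places N" "set_mset Q \<subseteq> places N"
    using set_mset_preset_postset[OF petri_N assms(2)] unfolding P_def Q_def .
  then have parts:
      "N_part m = filter_mset (\<lambda>p. p \<noteq> n) P + N_part R" "M_part m = repeat_mset cP O\<^sub>M + M_part R"
      "N_part m' = N_part R + filter_mset (\<lambda>p. p \<noteq> n) Q" "M_part m' = M_part R + repeat_mset cQ I\<^sub>M"
    using assms(3,4) preset_C_N[OF assms(2)] postset_C_N[OF assms(2)]
    by (simp_all add: parts_subst_tokens set_I_O_M P_def Q_def cP_def cQ_def)
  \<comment> \<open>the cP tokens taken from the outputs of M must have been delivered by M\<close>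
  have run_M': "reach M (repeat_mset (d + e) I\<^sub>M) (M_part R + repeat_mset (cP + e) O\<^sub>M)"
    using run_M unfolding parts by (simp add: repeat_mset_distrib ac_simps)
  then have "cP + e \<le> d + e"
    using sub_sound_p_outputs_le_inputs[OF pWF_M sound_M set_M_part] by blast
  then have cP_le: "cP \<le> d"
    by simp
  have "step N (N_part m + replicate_mset d n) (N_part m' + replicate_mset (d - cP + cQ) n)"
    using step_with_tokens_on_n[OF assms(2) cP_le[unfolded cP_def P_def], of "N_part R"]
    unfolding parts P_def Q_def cP_def cQ_def by (simp add: ac_simps)
  then have "reach N (repeat_mset k (mset_set (ins N)))
      (N_part m' + replicate_mset (d - cP + cQ) n)"
    using run_N reach_trans reach_step by metis
  moreover have "reach M (repeat_mset (d - cP + cQ + (cP + e)) I\<^sub>M)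
      (M_part m' + repeat_mset (cP + e) O\<^sub>M)"
    using reach_add_right[OF run_M', of "repeat_mset cQ I\<^sub>M"] cP_le unfolding parts
    by (simp add: repeat_mset_distrib ac_simps)
  ultimately show ?thesis
    unfolding consistent_def by blast
qed

lemma consistent_reach:
  assumes "reach C (repeat_mset k (mset_set (ins C))) m"
  shows "consistent k m"
  using assms
proof (induction rule: reach_induct)
  case refl
  show ?case by (rule consistent_init)
next
  case (step x y)
  from step.hyps(2) show ?case
  proof (rule stepE)
    fix t R assume t: "t \<in> trans C" "x = mset_set (preset (flow C) t) + R"
      "y = R + mset_set (postset (flow C) t)"
    show ?thesis
    proof (cases "t \<in> trans M")
      case True
      then show ?thesis
        using consistent_step_M[OF step.IH True] t preset_postset_C_M by simp
    next
      case False
      then show ?thesis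
        using consistent_step_N[OF step.IH] t trans_C by blast
    qed
  qed
qed

lemma consistent_outputs:
  assumes "consistent k (m + repeat_mset k' (mset_set (outs C)))"
  obtains d where
    "reach N (repeat_mset k (mset_set (ins N)))
       (N_part m + replicate_mset d n + repeat_mset k' (mset_set (outs N)))"
    "reach M (M_part m) (repeat_mset d O\<^sub>M)"
proof -
  obtain d e where
    run_N: "reach N (repeat_mset k (mset_set (ins N)))
      (N_part (m + repeat_mset k' (mset_set (outs C))) + replicate_mset d n)" and
    run_M: "reach M (repeat_mset (d + e) I\<^sub>M)
      (M_part (m + repeat_mset k' (mset_set (outs C))) + repeat_mset e O\<^sub>M)"
    using assms unfolding consistent_def by blast
  define O' where "O' = filter_mset (\<lambda>p. p \<noteq> n) (mset_set (outs N))"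
  define j where "j = k' * count (mset_set (outs N)) n"
  have "set_mset (mset_set (outs N)) \<subseteq> places N"
    using outs_N set_mset_mset_set_subset[of "outs N"] by blast
  then have parts_outs: "N_part (repeat_mset k' (mset_set (outs C))) = repeat_mset k' O'"
      "M_part (repeat_mset k' (mset_set (outs C))) = repeat_mset j O\<^sub>M"
    unfolding mset_outs_C N_part_repeat M_part_repeat O'_def j_def
    by (simp_all add: parts_subst_tokens set_I_O_M)
  have run_M': "reach M (repeat_mset (d + e) I\<^sub>M) (M_part m + repeat_mset (j + e) O\<^sub>M)"
    using run_M unfolding M_part_add parts_outs by (simp add: repeat_mset_distrib ac_simps)
  have "j + e \<le> d + e"
    by (rule sub_sound_p_outputs_le_inputs[OF pWF_M sound_M set_M_part run_M'])
  then have "reach M (M_part m) (repeat_mset (d - j) O\<^sub>M)"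
    using sub_sound_pD[OF sound_M _ set_M_part run_M'] by simp
  moreover have "repeat_mset k' (mset_set (outs N)) = repeat_mset k' O' + replicate_mset j n"
    using split_n_tokens[of "mset_set (outs N)"] unfolding O'_def j_def
    by (metis repeat_mset_distrib2 repeat_mset_replicate_mset repeat_mset_right)
  then have "reach N (repeat_mset k (mset_set (ins N)))
      (N_part m + replicate_mset (d - j) n + repeat_mset k' (mset_set (outs N)))"
    using run_N \<open>j + e \<le> d + e\<close> unfolding N_part_add parts_outs
    by (simp add: ac_simps flip: replicate_mset_plus)
  ultimately show thesis
    using that by blast
qed

theorem sub_sound_p_subst: "sub_sound_p C"
  unfolding sub_sound_p_def
proof (intro allI impI)
  fix k k' m
  assume "k' \<le> k" and m_places: "set_mset m \<subseteq> places C"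
    and "reach C (repeat_mset k (mset_set (ins C))) (m + repeat_mset k' (mset_set (outs C)))"
  then obtain d where
    run_N: "reach N (repeat_mset k (mset_set (ins N)))
      (N_part m + replicate_mset d n + repeat_mset k' (mset_set (outs N)))" and
    drain_M: "reach M (M_part m) (repeat_mset d O\<^sub>M)"
    using consistent_outputs consistent_reach by blast
  have "n \<notin># N_part m" "set_mset (N_part m) \<subseteq> places N"
    using m_places unfolding N_part_def subst_def by auto
  then have drain_N: "reach N (N_part m + replicate_mset d n) (repeat_mset (k - k') (mset_set (outs N)))"
    using sub_sound_pD[OF sound_N \<open>k' \<le> k\<close> _ run_N] n_place by (simp add: set_mset_repeat_mset)
  have "reach C m (N_part m + repeat_mset d O\<^sub>M)"
    using reach_add[OF reach_refl reach_M_in_C[OF drain_M], of "N_part m"]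
    by (simp add: N_part_M_part)
  also have "N_part m + repeat_mset d O\<^sub>M = subst_tokens O\<^sub>M (N_part m + replicate_mset d n)"
    using \<open>n \<notin># N_part m\<close> by (simp add: subst_tokens_no_n)
  finally show "reach C m (repeat_mset (k - k') (mset_set (outs C)))"
    using reach_N_in_C[OF drain_N] reach_trans
    by (simp add: mset_outs_C subst_tokens_repeat)
qed

end

locale trans_subst = subst_nets +
  assumes n_trans: "n \<in> trans N" and tWF_M: "tWF M" and sound_M: "sub_sound_p (pc M)"
begin

abbreviation pre_n :: "'a multiset" where "pre_n \<equiv> mset_set (preset (flow N) n)"
abbreviation post_n :: "'a multiset" where "post_n \<equiv> mset_set (postset (flow N) n)"

lemma ins_outs_M: "ins M \<subseteq> trans M" "outs M \<subseteq> trans M"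
  using tWF_M unfolding tWF_def by blast+

lemma n_not_place: "n \<notin> places N"
  using n_trans places_trans_disjoint(1) by blast

lemma set_pre_post_n: "set_mset pre_n \<subseteq> places N" "set_mset post_n \<subseteq> places N"
  by (rule set_mset_preset_postset[OF petri_N n_trans])+

lemma trans_C: "trans C = (trans N - {n}) \<union> trans M"
  unfolding subst_def by simp

lemma places_C: "places C = places N \<union> places M"
  using n_not_place unfolding subst_def by auto

lemma ins_outs_C: "ins C = ins N" "outs C = outs N"
  using ins_N outs_N n_not_place unfolding subst_def by auto

lemma preset_postset_C_N:
  assumes "t \<in> trans N" "t \<noteq> n"
  shows "preset (flow C) t = preset (flow N) t" "postset (flow C) t = postset (flow N) t"
  using assms disjoint_nodes ins_outs_M places_trans_disjoint(1) n_trans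
  by (auto simp: subst_def preset_def postset_def dest: edge_M edge_N)

lemma preset_C_M:
  assumes "t \<in> trans M"
  shows "mset_set (preset (flow C) t) = mset_set (preset (flow M) t) + repeat_mset (of_bool (t \<in> ins M)) pre_n"
proof -
  have "preset (flow C) t = preset (flow M) t \<union> (if t \<in> ins M then preset (flow N) n else {})"
    using assms disjoint_nodes by (auto simp: subst_def preset_def postset_def dest: edge_N)
  moreover have "preset (flow M) t \<inter> preset (flow N) n = {}"
    using preset_subset_places[OF petri_M assms] preset_subset_places[OF petri_N n_trans]
      disjoint_nodes(1) by blast
  ultimately show ?thesis
    by (simp add: mset_set_Union finite_preset_postset)
qed

lemma postset_C_M:
  assumes "t \<in> trans M"
  shows "mset_set (postset (flow C) t) = mset_set (postset (flow M) t) + repeat_mset (of_bool (t \<in> outs M)) post_n"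
proof -
  have "postset (flow C) t = postset (flow M) t \<union> (if t \<in> outs M then postset (flow N) n else {})"
    using assms disjoint_nodes by (auto simp: subst_def preset_def postset_def dest: edge_N)
  moreover have "postset (flow M) t \<inter> postset (flow N) n = {}"
    using postset_subset_places[OF petri_M assms] postset_subset_places[OF petri_N n_trans]
      disjoint_nodes(1) by blast
  ultimately show ?thesis
    by (simp add: mset_set_Union finite_preset_postset)
qed

lemma preset_pc_M:
  "mset_set (preset (flow (pc M)) (Inl t)) =
     image_mset Inl (mset_set (preset (flow M) t)) + replicate_mset (of_bool (t \<in> ins M)) (Inr False)"
  using finite_preset_postset(3)[of t]
  by (auto simp: preset_pc_Inl image_mset_mset_set intro: mset_set.insert)

lemma postset_pc_M:
  "mset_set (postset (flow (pc M)) (Inl t)) =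
     image_mset Inl (mset_set (postset (flow M) t)) + replicate_mset (of_bool (t \<in> outs M)) (Inr True)"
  using finite_preset_postset(4)[of t]
  by (auto simp: postset_pc_Inl image_mset_mset_set intro: mset_set.insert)

text \<open>Reading a marking of pc M in C: p_i = Inr False and p_o = Inr True stand for the pre- and
  postset of n.\<close>
definition decode :: "('a + bool) multiset \<Rightarrow> 'a multiset" where
  "decode y = image_mset projl (filter_mset isl y)
     + repeat_mset (count y (Inr False)) pre_n + repeat_mset (count y (Inr True)) post_n"

lemma decode_add [simp]: "decode (x + y) = decode x + decode y"
  unfolding decode_def by (simp add: repeat_mset_distrib ac_simps)

lemma decode_empty [simp]: "decode {#} = {#}"
  unfolding decode_def by simp

lemma decode_Inl [simp]: "decode (image_mset Inl x) = x"
  unfolding decode_def by (induction x) auto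

lemma decode_single [simp]: "decode {#Inr False#} = pre_n" "decode {#Inr True#} = post_n"
  unfolding decode_def by simp_all

lemma decode_replicate [simp]:
  "decode (replicate_mset j (Inr False)) = repeat_mset j pre_n"
  "decode (replicate_mset j (Inr True)) = repeat_mset j post_n"
  unfolding decode_def by (induction j) auto

lemma reach_pc_in_C: "reach (pc M) y y' \<Longrightarrow> reach C (decode y) (decode y')"
proof (induction rule: reach_induct)
  case (step y' y'')
  from step.hyps(2) show ?case
  proof (rule stepE)
    fix t R assume t: "t \<in> trans (pc M)" "y' = mset_set (preset (flow (pc M)) t) + R"
      "y'' = R + mset_set (postset (flow (pc M)) t)"
    then obtain t0 where t0: "t = Inl t0" "t0 \<in> trans M"
      by auto
    then have "step C (decode y') (decode y'')"
      using step_transition[of t0 C "decode R"] t trans_C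
      by (simp add: preset_pc_M postset_pc_M preset_C_M postset_C_M ac_simps)
    then show ?thesis
      using step.IH reach_trans reach_step by blast
  qed
qed simp

lemma reach_pre_post_n: "reach C pre_n post_n"
  using reach_pc_in_C[OF sub_sound_p_reach_ins_outs[OF pc_pWF[OF tWF_M] sound_M]] by simp

text \<open>Firing n is simulated in C by a run of M from its input to its output transitions.\<close>
lemma reach_N_in_C: "reach N x y \<Longrightarrow> reach C x y"
proof (induction rule: reach_induct)
  case (step y z)
  from step.hyps(2) show ?case
  proof (rule stepE)
    fix t R assume t: "t \<in> trans N" "y = mset_set (preset (flow N) t) + R"
      "z = R + mset_set (postset (flow N) t)"
    have "reach C y z"
    proof (cases "t = n")
      case True
      then show ?thesis
        using reach_add[OF reach_pre_post_n reach_refl, of R] t by (simp add: ac_simps)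
    next
      case False
      then show ?thesis
        using step_transition[of t C R] t trans_C preset_postset_C_N reach_step by simp
    qed
    then show ?thesis
      using step.IH reach_trans by blast
  qed
qed simp

text \<open>The invariant of runs of C: n has fired d + e times in the N-view; d of these runs are still
  inside M, e have completed.\<close>
definition consistent :: "nat \<Rightarrow> 'a multiset \<Rightarrow> bool" where
  "consistent k m \<longleftrightarrow> (\<exists>d e.
     reach N (repeat_mset k (mset_set (ins N))) (N_part m + repeat_mset d post_n) \<and>
     reach (pc M) (replicate_mset (d + e) (Inr False))
       (image_mset Inl (M_part m) + replicate_mset e (Inr True)))"

lemma consistent_init: "consistent k (repeat_mset k (mset_set (ins C)))"
proof -
  have "set_mset (mset_set (ins N)) \<subseteq> places N"
    using ins_N set_mset_mset_set_subset[of "ins N"] by blast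
  then have "set_mset (repeat_mset k (mset_set (ins N))) \<subseteq> places N"
    by (simp add: set_mset_repeat_mset)
  then show ?thesis
    unfolding consistent_def ins_outs_C
    by (intro exI[of _ 0]) (simp add: parts_of_N_marking)
qed

lemma reach_fire_n: "reach N (repeat_mset i pre_n + x) (x + repeat_mset i post_n)"
  using reach_add_right[OF reach_repeat_mset[OF reach_step[OF step_transition[OF n_trans, of "{#}"]]]]
  by (simp add: ac_simps)

lemma reach_pc_fire:
  assumes "t \<in> trans M"
    and "reach (pc M) (replicate_mset a (Inr False))
      (image_mset Inl (mset_set (preset (flow M) t) + X) + replicate_mset e (Inr True))"
  shows "reach (pc M) (replicate_mset (a + of_bool (t \<in> ins M)) (Inr False))
    (image_mset Inl (X + mset_set (postset (flow M) t)) + replicate_mset (e + of_bool (t \<in> outs M)) (Inr True))"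
proof -
  let ?x = "image_mset Inl X + replicate_mset e (Inr True)"
  have "reach (pc M) (replicate_mset (a + of_bool (t \<in> ins M)) (Inr False))
      (mset_set (preset (flow (pc M)) (Inl t)) + ?x)"
    using reach_add_right[OF assms(2), of "replicate_mset (of_bool (t \<in> ins M)) (Inr False)"]
    by (simp add: preset_pc_M replicate_mset_plus ac_simps)
  moreover have "step (pc M) (mset_set (preset (flow (pc M)) (Inl t)) + ?x)
      (?x + mset_set (postset (flow (pc M)) (Inl t)))"
    using assms(1) by (intro step_transition) simp
  ultimately show ?thesis
    using reach_trans reach_step by (fastforce simp: postset_pc_M replicate_mset_plus ac_simps)
qed

lemma consistent_step_N:
  assumes "consistent k m" "t \<in> trans N" "t \<noteq> n"
    and "m = mset_set (preset (flow N) t) + R" "m' = R + mset_set (postset (flow N) t)"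
  shows "consistent k m'"
proof -
  obtain d e where
    run_N: "reach N (repeat_mset k (mset_set (ins N))) (N_part m + repeat_mset d post_n)" and
    run_M: "reach (pc M) (replicate_mset (d + e) (Inr False))
      (image_mset Inl (M_part m) + replicate_mset e (Inr True))"
    using assms(1) unfolding consistent_def by blast
  note places_t = set_mset_preset_postset[OF petri_N assms(2)]
  have "M_part m' = M_part m"
    using assms(4,5) places_t by (simp add: parts_of_N_marking)
  moreover have "step N (N_part m + repeat_mset d post_n) (N_part m' + repeat_mset d post_n)"
    using step_transition[OF assms(2), of "N_part R + repeat_mset d post_n"] assms(4,5) places_t
    by (simp add: parts_of_N_marking ac_simps)
  ultimately show ?thesis
    unfolding consistent_def using run_N run_M reach_trans reach_step by metis
qed

lemma consistent_step_M:
  assumes "consistent k m" "t \<in> trans M"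
    and "m = mset_set (preset (flow C) t) + R" "m' = R + mset_set (postset (flow C) t)"
  shows "consistent k m'"
proof -
  obtain d e where
    run_N: "reach N (repeat_mset k (mset_set (ins N))) (N_part m + repeat_mset d post_n)" and
    run_M: "reach (pc M) (replicate_mset (d + e) (Inr False))
      (image_mset Inl (M_part m) + replicate_mset e (Inr True))"
    using assms(1) unfolding consistent_def by blast
  define i :: nat where "i = of_bool (t \<in> ins M)"
  define j :: nat where "j = of_bool (t \<in> outs M)"
  define A where "A = mset_set (preset (flow M) t)"
  define B where "B = mset_set (postset (flow M) t)"
  have "set_mset A \<subseteq> places M" "set_mset B \<subseteq> places M"
    using set_mset_preset_postset[OF petri_M assms(2)] unfolding A_def B_def .
  moreover have "set_mset (repeat_mset i pre_n) \<subseteq> places N"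
      "set_mset (repeat_mset j post_n) \<subseteq> places N"
    using set_pre_post_n by (simp_all add: set_mset_repeat_mset)
  ultimately have parts:
      "N_part m = repeat_mset i pre_n + N_part R" "M_part m = A + M_part R"
      "N_part m' = N_part R + repeat_mset j post_n" "M_part m' = M_part R + B"
    using assms(3,4) preset_C_M[OF assms(2)] postset_C_M[OF assms(2)]
    by (simp_all add: parts_of_N_marking parts_of_M_marking A_def B_def i_def j_def)
  have run_M': "reach (pc M) (replicate_mset (d + e + i) (Inr False))
      (image_mset Inl (M_part m') + replicate_mset (e + j) (Inr True))"
    using reach_pc_fire[OF assms(2), of "d + e" "M_part R" e] run_M
    unfolding parts A_def B_def i_def j_def by (simp add: ac_simps)
  have "set_mset (image_mset Inl (M_part m')) \<subseteq> places (pc M)"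
    using set_M_part by auto
  from sub_sound_p_outputs_le_inputs[OF pc_pWF[OF tWF_M] sound_M this] run_M'
  have "e + j \<le> d + e + i"
    by simp
  have "reach N (N_part m + repeat_mset d post_n) (N_part m' + repeat_mset (d + i - j) post_n)"
    using reach_fire_n[of i "N_part R + repeat_mset d post_n"] \<open>e + j \<le> d + e + i\<close>
    unfolding parts by (simp add: repeat_mset_distrib[symmetric] ac_simps)
  then have "reach N (repeat_mset k (mset_set (ins N))) (N_part m' + repeat_mset (d + i - j) post_n)"
    using run_N reach_trans by blast
  moreover have "d + i - j + (e + j) = d + e + i"
    using \<open>e + j \<le> d + e + i\<close> by simp
  ultimately show ?thesis
    unfolding consistent_def using run_M' by metis
qed

lemma consistent_reach:
  assumes "reach C (repeat_mset k (mset_set (ins C))) m"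
  shows "consistent k m"
  using assms
proof (induction rule: reach_induct)
  case refl
  show ?case by (rule consistent_init)
next
  case (step x y)
  from step.hyps(2) show ?case
  proof (rule stepE)
    fix t R assume t: "t \<in> trans C" "x = mset_set (preset (flow C) t) + R"
      "y = R + mset_set (postset (flow C) t)"
    show ?thesis
    proof (cases "t \<in> trans M")
      case True
      then show ?thesis
        using consistent_step_M[OF step.IH True] t by blast
    next
      case False
      then have "t \<in> trans N" "t \<noteq> n"
        using t(1) trans_C by auto
      then show ?thesis
        using consistent_step_N[OF step.IH] t preset_postset_C_N by simp
    qed
  qed
qed

lemma consistent_outputs:
  assumes "consistent k (m + repeat_mset k' (mset_set (outs C)))"
  obtains d where
    "reach N (repeat_mset k (mset_set (ins N)))
       (N_part m + repeat_mset d post_n + repeat_mset k' (mset_set (outs N)))"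
    "reach C (M_part m) (repeat_mset d post_n)"
proof -
  obtain d e where
    run_N: "reach N (repeat_mset k (mset_set (ins N)))
      (N_part (m + repeat_mset k' (mset_set (outs N))) + repeat_mset d post_n)" and
    run_M: "reach (pc M) (replicate_mset (d + e) (Inr False))
      (image_mset Inl (M_part (m + repeat_mset k' (mset_set (outs N)))) + replicate_mset e (Inr True))"
    using assms unfolding consistent_def ins_outs_C by blast
  have "set_mset (repeat_mset k' (mset_set (outs N))) \<subseteq> places N"
    using outs_N set_mset_mset_set_subset[of "outs N"] by (auto simp: set_mset_repeat_mset)
  then have parts_outs: "N_part (repeat_mset k' (mset_set (outs N))) = repeat_mset k' (mset_set (outs N))"
      "M_part (repeat_mset k' (mset_set (outs N))) = {#}"
    by (simp_all add: parts_of_N_marking)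
  have "set_mset (image_mset Inl (M_part m)) \<subseteq> places (pc M)"
    using set_M_part by auto
  moreover have "reach (pc M) (repeat_mset (d + e) (mset_set (ins (pc M))))
      (image_mset Inl (M_part m) + repeat_mset e (mset_set (outs (pc M))))"
    using run_M unfolding M_part_add parts_outs by simp
  ultimately have "reach (pc M) (image_mset Inl (M_part m)) (replicate_mset d (Inr True))"
    using sub_sound_pD[OF sound_M le_add2] by simp
  then have "reach C (M_part m) (repeat_mset d post_n)"
    using reach_pc_in_C by fastforce
  moreover have "reach N (repeat_mset k (mset_set (ins N)))
      (N_part m + repeat_mset d post_n + repeat_mset k' (mset_set (outs N)))"
    using run_N unfolding N_part_add parts_outs by (simp add: ac_simps)
  ultimately show thesis
    using that by blast
qed

theorem sub_sound_p_subst: "sub_sound_p C"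
  unfolding sub_sound_p_def
proof (intro allI impI)
  fix k k' m
  assume "k' \<le> k" and m_places: "set_mset m \<subseteq> places C"
    and "reach C (repeat_mset k (mset_set (ins C))) (m + repeat_mset k' (mset_set (outs C)))"
  then obtain d where
    run_N: "reach N (repeat_mset k (mset_set (ins N)))
      (N_part m + repeat_mset d post_n + repeat_mset k' (mset_set (outs N)))" and
    drain_M: "reach C (M_part m) (repeat_mset d post_n)"
    using consistent_outputs consistent_reach by blast
  have "set_mset (N_part m + repeat_mset d post_n) \<subseteq> places N"
    using m_places set_pre_post_n(2) unfolding N_part_def places_C by (auto simp: set_mset_repeat_mset)
  then have "reach N (N_part m + repeat_mset d post_n) (repeat_mset (k - k') (mset_set (outs N)))"
    using sub_sound_pD[OF sound_N \<open>k' \<le> k\<close> _ run_N] by blast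
  moreover have "reach C m (N_part m + repeat_mset d post_n)"
    using reach_add[OF reach_refl drain_M, of "N_part m"] by (simp add: N_part_M_part)
  ultimately show "reach C m (repeat_mset (k - k') (mset_set (outs C)))"
    using reach_N_in_C reach_trans unfolding ins_outs_C by blast
qed

end

lemma sub_sound_pWF_iff: "pWF N \<Longrightarrow> sub_sound N \<longleftrightarrow> sub_sound_p N"
  unfolding sub_sound_def using pWF_not_tWF by blast

lemma sub_sound_tWF_iff: "tWF N \<Longrightarrow> sub_sound N \<longleftrightarrow> sub_sound_p (pc N)"
  unfolding sub_sound_def using pWF_not_tWF by blast

lemma sub_sound_rename:
  assumes "inj f" "sub_sound N"
  shows "sub_sound (rename f N)"
proof -
  have "inj (map_sum f (id :: bool \<Rightarrow> bool))"
    using assms(1) by (simp add: sum.inj_map)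
  then show ?thesis
    using assms pWF_rename tWF_rename sub_sound_p_rename
    unfolding sub_sound_def pc_rename by metis
qed

lemma subst_compatible_pc:
  "subst_compatible N n M \<Longrightarrow> subst_compatible (pc N) (Inl n) (rename Inl M)"
  unfolding subst_compatible_def using pWF_rename[OF inj_Inl] tWF_rename[OF inj_Inl] by auto

lemma sub_sound_p_subst_pWF:
  assumes "pWF N" "sub_sound_p N" "sub_sound M"
    and "subst_compatible N n M" "nodes N \<inter> nodes M = {}"
  shows "sub_sound_p (subst N n M)"
proof -
  have net_N: "petri_net (places N) (trans N) (flow N)" "ins N \<subseteq> places N" "outs N \<subseteq> places N"
    using assms(1) pWF_petri_net unfolding pWF_def by blast+
  from assms(4) show ?thesis
    unfolding subst_compatible_def
  proof (elim disjE conjE)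
    assume "n \<in> places N" "pWF M"
    then interpret place_subst N M n
      using net_N assms(2,3,5) pWF_petri_net sub_sound_pWF_iff by unfold_locales blast+
    show ?thesis by (rule sub_sound_p_subst)
  next
    assume "n \<in> trans N" "tWF M"
    then interpret trans_subst N M n
      using net_N assms(2,3,5) tWF_petri_net sub_sound_tWF_iff by unfold_locales blast+
    show ?thesis by (rule sub_sound_p_subst)
  qed
qed

lemma sub_sound_p_pc_subst:
  assumes "tWF N" "sub_sound N" "sub_sound M"
    and "subst_compatible N n M" "nodes N \<inter> nodes M = {}"
  shows "sub_sound_p (pc (subst N n M))"
  unfolding pc_subst
proof (rule sub_sound_p_subst_pWF)
  show "pWF (pc N)"
    using assms(1) by (rule pc_pWF)
  show "sub_sound_p (pc N)"
    using assms(1,2) by (simp add: sub_sound_tWF_iff)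
  show "sub_sound (rename Inl M)"
    using inj_Inl assms(3) by (rule sub_sound_rename)
  show "subst_compatible (pc N) (Inl n) (rename Inl M)"
    using assms(4) by (rule subst_compatible_pc)
  show "nodes (pc N) \<inter> nodes (rename Inl M) = {}"
    using assms(5) unfolding nodes_pc nodes_rename by auto
qed

theorem mainTheorem15:
  fixes N M :: "'a wfnet" and n :: 'a
  assumes "WF N" and "WF M"
    and "sub_sound N" and "sub_sound M"
    and "nodes N \<inter> nodes M = {}"
    and "(n \<in> places N \<and> pWF M) \<or> (n \<in> trans N \<and> tWF M)"
  shows "WF (subst N n M) \<and> sub_sound (subst N n M)"
proof -
  have compatible: "subst_compatible N n M"
    using assms(6) unfolding subst_compatible_def .
  from assms(1) consider "pWF N" | "tWF N"
    unfolding WF_def by blast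
  then show ?thesis
  proof cases
    case 1
    have "sub_sound_p (subst N n M)"
      using 1 assms(3) sub_sound_pWF_iff
      by (intro sub_sound_p_subst_pWF[OF 1 _ assms(4) compatible assms(5)]) blast
    then show ?thesis
      using pWF_subst[OF 1 compatible assms(5)] unfolding WF_def by (simp add: sub_sound_pWF_iff)
  next
    case 2
    have "sub_sound_p (pc (subst N n M))"
      using 2 assms(3,4) compatible assms(5) by (rule sub_sound_p_pc_subst)
    then show ?thesis
      using tWF_subst[OF 2 compatible assms(5)] unfolding WF_def by (simp add: sub_sound_tWF_iff)
  qed
qed

end
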